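(* Let $d\ge 2$ be an integer and let $r$ be the integer closest to $d/3$. For every integer $k\ge 2$, the seed $Q(d)=\#^{d-r}-\#^{r}$ is $k$-optimal in $\mathcal C_1(d)$, i.e. its $k$-critical length is minimal among all seeds $\#^{p}-\#^{q}$ with $p,q\ge 1$, $p+q=d$.
   Context: A seed is a finite word over $\{\#,-\}$ that begins and ends with $\#$; $-$ is called a joker; the weight is the number of $\#$'s. A binary word is an $(m,k)$-similarity if it has length $m$ and exactly $k$ zeros. A seed $Q$ of length $s$ matches a binary word $w$ at position $i$ ($1\le i\le |w|-s+1$) if $w[i+t-1]=1$ for every $t$ with $Q[t]=\#$; $Q$ detects $w$ if it matches at some position; $Q$ solves the $(m,k)$-problem if it detects every $(m,k)$-similarity. The $k$-critical length of $Q$ is the minimal $m$ such that $Q$ solves the $(m,k)$-problem. $\mathcal C_1(d)$ is the class of seeds of weight $d$ with exactly one joker. A seed is $k$-optimal in $\mathcal C_1(d)$ if it has minimal $k$-critical length among all seeds of $\mathcal C_1(d)$. *)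

theory Defs
  imports Complex_Main
begin

text \<open>In a seed, True stands for # and False for the joker -.
  In a binary word, True stands for 1 and False for 0.
  Positions are 0-based here (position i here = position i+1 in the paper).\<close>

definition is_seed :: "bool list \<Rightarrow> bool" where
  "is_seed Q \<longleftrightarrow> Q \<noteq> [] \<and> hd Q \<and> last Q"

definition weight :: "bool list \<Rightarrow> nat" where
  "weight Q = length (filter id Q)"

definition jokers :: "bool list \<Rightarrow> nat" where
  "jokers Q = length (filter Not Q)"

definition similarity :: "nat \<Rightarrow> nat \<Rightarrow> bool list \<Rightarrow> bool" where
  "similarity m k w \<longleftrightarrow> length w = m \<and> length (filter Not w) = k"

definition matches_at :: "bool list \<Rightarrow> bool list \<Rightarrow> nat \<Rightarrow> bool" where
  "matches_at Q w i \<longleftrightarrow> i + length Q \<le> length w \<and>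
     (\<forall>t < length Q. Q ! t \<longrightarrow> w ! (i + t))"

definition detects :: "bool list \<Rightarrow> bool list \<Rightarrow> bool" where
  "detects Q w \<longleftrightarrow> (\<exists>i. matches_at Q w i)"

definition solves :: "bool list \<Rightarrow> nat \<Rightarrow> nat \<Rightarrow> bool" where
  "solves Q m k \<longleftrightarrow> (\<forall>w. similarity m k w \<longrightarrow> detects Q w)"

text \<open>k-critical length: the threshold length from which on Q solves the (m,k)-problem.
  (For m < k there are no (m,k)-similarities, so the problem is vacuous.)\<close>
definition critical_length :: "bool list \<Rightarrow> nat \<Rightarrow> nat" where
  "critical_length Q k = (LEAST m. \<forall>m'\<ge>m. solves Q m' k)"

definition C1 :: "nat \<Rightarrow> bool list set" where
  "C1 d = {Q. is_seed Q \<and> weight Q = d \<and> jokers Q = 1}"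

definition k_optimal :: "nat \<Rightarrow> nat \<Rightarrow> bool list \<Rightarrow> bool" where
  "k_optimal k d Q \<longleftrightarrow> Q \<in> C1 d \<and> (\<forall>Q' \<in> C1 d. critical_length Q k \<le> critical_length Q' k)"

definition Qseed :: "nat \<Rightarrow> bool list" where
  "Qseed d = (let r = nat (round (real d / 3)) in
     replicate (d - r) True @ [False] @ replicate r True)"

end

theory Submission imports Defs begin

(* Write a binary word with k zeros by its run lengths: it is
   1^a0 0 1^a1 0 ... 0 1^ak for a unique list [a0,...,ak].  The seed #^p - #^q
   fails to detect this word exactly when every run has length at most p + q and
   no two consecutive runs satisfy ai >= p and a(i+1) >= q ("the list avoids (p,q)").
   Hence the k-critical length of #^p - #^q is k + 1 + (largest sum of an avoiding
   list of length k + 1).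
   For the seed Q(d) = #^P - #^R (R = round (d/3)) we bound that sum by an explicit
   quantity sum_bound P R k, using P <= 2R+1.  For any other seed #^p - #^q with
   q <= p (the case p < q reduces to it by reversing seed and words) we exhibit two
   avoiding lists, "p-1, ..., p-1, p+q" and "p+q, q-1, p+q, q-1, ...", and check
   arithmetically that one of their sums reaches sum_bound P R k. *)

section \<open>Run-length encoding of binary words\<close>

fun runs :: "nat list \<Rightarrow> bool list" where
  "runs [] = []"
| "runs [a] = replicate a True"
| "runs (a # b # as) = replicate a True @ False # runs (b # as)"

lemma runs_Cons_Suc: "runs (Suc a # as) = True # runs (a # as)"
  by (cases as) auto

lemma runs_surj: "\<exists>as. runs as = w \<and> length as = length (filter Not w) + 1"
proof (induction w)
  case Nil
  show ?case by (intro exI[of _ "[0]"]) auto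
next
  case (Cons x w)
  then obtain a as where IH: "runs (a # as) = w" "length (a # as) = length (filter Not w) + 1"
    by (metis length_0_conv neq_Nil_conv zero_eq_add_iff_both_eq_0 zero_neq_one)
  show ?case
  proof (cases x)
    case True
    then show ?thesis using IH by (intro exI[of _ "Suc a # as"]) (simp add: runs_Cons_Suc)
  next
    case False
    then show ?thesis using IH by (intro exI[of _ "0 # a # as"]) simp
  qed
qed

lemma length_runs: "as \<noteq> [] \<Longrightarrow> length (runs as) = sum_list as + length as - 1"
  by (induction as rule: runs.induct) auto

lemma zeros_runs: "length (filter Not (runs as)) = length as - 1"
  by (induction as rule: runs.induct) auto

lemma runs_nth_first_run: "j < a \<Longrightarrow> runs (a # as) ! j"
  by (cases as) (auto simp: nth_append)

lemma first_run_le_length: "a \<le> length (runs (a # as))"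
  by (cases as) auto

definition seed :: "nat \<Rightarrow> nat \<Rightarrow> bool list" where
  "seed p q = replicate p True @ False # replicate q True"

lemma length_seed: "length (seed p q) = p + q + 1"
  by (simp add: seed_def)

lemma nth_seed: "t < p + q + 1 \<Longrightarrow> seed p q ! t = (t \<noteq> p)"
  by (auto simp: seed_def nth_append nth_Cons split: nat.splits)

lemma rev_seed: "rev (seed p q) = seed q p"
  by (simp add: seed_def)

lemma C1_iff: "Q \<in> C1 d \<longleftrightarrow> (\<exists>p q. Q = seed p q \<and> 1 \<le> p \<and> 1 \<le> q \<and> p + q = d)"
proof
  assume "Q \<in> C1 d"
  then have s: "is_seed Q" and w: "weight Q = d" and j: "jokers Q = 1"
    by (auto simp: C1_def)
  have "False \<in> set Q"
    using j unfolding jokers_def by (metis filter_False length_0_conv zero_neq_one)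
  then obtain xs ys where Q: "Q = xs @ False # ys" and "False \<notin> set xs"
    using split_list_first by metis
  moreover have "length (filter Not ys) = 0"
    using j Q \<open>False \<notin> set xs\<close> unfolding jokers_def by auto
  then have "False \<notin> set ys" by (metis filter_empty_conv length_0_conv)
  ultimately have Qe: "Q = seed (length xs) (length ys)"
    unfolding seed_def by (metis (full_types) replicate_length_same)
  moreover have "length xs \<noteq> 0" "length ys \<noteq> 0"
    using s Qe unfolding is_seed_def seed_def by auto
  moreover have "length xs + length ys = d"
    using w Qe unfolding weight_def seed_def by simp
  ultimately show "\<exists>p q. Q = seed p q \<and> 1 \<le> p \<and> 1 \<le> q \<and> p + q = d"
    by (metis One_nat_def less_one not_less)
next
  assume "\<exists>p q. Q = seed p q \<and> 1 \<le> p \<and> 1 \<le> q \<and> p + q = d"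
  then show "Q \<in> C1 d"
    unfolding C1_def is_seed_def weight_def jokers_def seed_def
    by (auto simp: not_less_eq_eq[symmetric] Suc_le_eq gr0_conv_Suc)
qed

lemma matches_at_append_left:
  "matches_at Q w i \<Longrightarrow> matches_at Q (u @ w) (length u + i)"
  by (auto simp: matches_at_def nth_append)

lemma matches_at_drop_left:
  assumes "matches_at Q (u @ w) i" "length u \<le> i"
  shows "matches_at Q w (i - length u)"
  using assms unfolding matches_at_def
  by (auto simp: nth_append)

fun avoids :: "nat \<Rightarrow> nat \<Rightarrow> nat list \<Rightarrow> bool" where
  "avoids p q [] = True"
| "avoids p q [a] = (a \<le> p + q)"
| "avoids p q (a # b # as) = (a \<le> p + q \<and> \<not> (p \<le> a \<and> q \<le> b) \<and> avoids p q (b # as))"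

lemma avoids_tl: "avoids p q (a # as) \<Longrightarrow> avoids p q as"
  by (cases as) auto

lemma avoids_sum_le: "avoids p q as \<Longrightarrow> sum_list as \<le> length as * (p + q)"
  by (induction p q as rule: avoids.induct) auto

lemma detects_consecutive_runs:
  assumes "p \<le> a" "q \<le> b"
  shows "detects (seed p q) (runs (a # b # as))"
proof -
  have "matches_at (seed p q) (runs (a # b # as)) (a - p)"
    unfolding matches_at_def length_seed
  proof (intro conjI allI impI)
    show "a - p + (p + q + 1) \<le> length (runs (a # b # as))"
      using first_run_le_length[of b as] assms by simp
    fix t assume t: "t < p + q + 1" "seed p q ! t"
    then have "t \<noteq> p" using nth_seed by auto
    show "runs (a # b # as) ! (a - p + t)"
    proof (cases "t < p")
      case True
      then show ?thesis using assms by (simp add: nth_append)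
    next
      case False
      then have "a - p + t = a + 1 + (t - p - 1)" "t - p - 1 < b"
        using \<open>t \<noteq> p\<close> t assms by auto
      then show ?thesis using runs_nth_first_run[of "t - p - 1" b as] by (simp add: nth_append)
    qed
  qed
  then show ?thesis unfolding detects_def by blast
qed

lemma detects_long_run:
  assumes "p + q < a"
  shows "detects (seed p q) (runs (a # as))"
proof -
  have "matches_at (seed p q) (runs (a # as)) 0"
    unfolding matches_at_def length_seed
    using first_run_le_length[of a as] runs_nth_first_run[of _ a as] assms by auto
  then show ?thesis unfolding detects_def by blast
qed

lemma detects_runs_if_not_avoids: "\<not> avoids p q as \<Longrightarrow> detects (seed p q) (runs as)"
proof (induction as rule: runs.induct)
  case (2 a)
  then show ?case using detects_long_run[of p q a "[]"] by simp
next
  case (3 a b as)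
  consider "p + q < a" | "p \<le> a \<and> q \<le> b" | "\<not> avoids p q (b # as)"
    using "3.prems" by force
  then show ?case
  proof cases
    case 1
    then show ?thesis using detects_long_run[of p q a "b # as"] by simp
  next
    case 2
    then show ?thesis using detects_consecutive_runs by blast
  next
    case 3
    then obtain i where "matches_at (seed p q) (runs (b # as)) i"
      using "3.IH" unfolding detects_def by blast
    then have "matches_at (seed p q) ((replicate a True @ [False]) @ runs (b # as))
                 (length (replicate a True @ [False]) + i)"
      by (rule matches_at_append_left)
    then show ?thesis unfolding detects_def by auto
  qed
qed simp

text \<open>Conversely, a match must place the joker on a zero between two runs of
  lengths >= p and >= q, which an avoiding list forbids.\<close>
lemma not_detects_runs_if_avoids: "avoids p q as \<Longrightarrow> \<not> detects (seed p q) (runs as)"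
proof (induction as rule: runs.induct)
  case 1
  then show ?case by (simp add: detects_def matches_at_def length_seed)
next
  case (2 a)
  then show ?case by (simp add: detects_def matches_at_def length_seed)
next
  case (3 a b as)
  have a: "a \<le> p + q" and ab: "\<not> (p \<le> a \<and> q \<le> b)" and tl: "avoids p q (b # as)"
    using "3.prems" by auto
  let ?w = "runs (a # b # as)"
  show ?case
  proof
    assume "detects (seed p q) ?w"
    then obtain i where m: "matches_at (seed p q) ?w i" unfolding detects_def by blast
    show False
    proof (cases "a + 1 \<le> i")
      case True
      have "?w = (replicate a True @ [False]) @ runs (b # as)" by simp
      then have "matches_at (seed p q) (runs (b # as)) (i - (a + 1))"
        using matches_at_drop_left[of "seed p q" "replicate a True @ [False]"] m True by simp
      then show False using "3.IH" tl unfolding detects_def by blast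
    next
      case False
      have len: "i + (p + q + 1) \<le> a + 1 + length (runs (b # as))"
        and hit: "\<And>t. t < p + q + 1 \<Longrightarrow> seed p q ! t \<Longrightarrow> ?w ! (i + t)"
        using m unfolding matches_at_def length_seed by auto
      text \<open>The zero at position a must fall under the joker.\<close>
      have joker: "a - i = p"
      proof (rule ccontr)
        assume "a - i \<noteq> p"
        then have "?w ! (i + (a - i))" using hit[of "a - i"] nth_seed a by auto
        then show False using False by (simp add: nth_append)
      qed
      text \<open>Then the q ones after the joker all lie in the second run.\<close>
      have "q \<le> b"
      proof (rule ccontr)
        assume bq: "\<not> q \<le> b"
        show False
        proof (cases as)
          case Nil
          then show False using len joker False bq by simp
        next
          case (Cons c cs)
          have "?w ! (i + (p + 1 + b))" using hit[of "p + 1 + b"] nth_seed bq by auto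
          moreover have "i + (p + 1 + b) = (a + 1) + b" using joker False by simp
          moreover have "\<not> ?w ! ((a + 1) + b)" using Cons by (simp add: nth_append)
          ultimately show False by metis
        qed
      qed
      then show False using ab joker False by simp
    qed
  qed
qed

lemma detects_runs_iff: "detects (seed p q) (runs as) \<longleftrightarrow> \<not> avoids p q as"
  using detects_runs_if_not_avoids not_detects_runs_if_avoids by blast

section \<open>Critical length in terms of avoiding lists\<close>

lemma solves_seed_iff:
  "solves (seed p q) m k \<longleftrightarrow>
     (\<forall>as. avoids p q as \<longrightarrow> length as = k + 1 \<longrightarrow> k + sum_list as \<noteq> m)"
proof
  assume sol: "solves (seed p q) m k"
  show "\<forall>as. avoids p q as \<longrightarrow> length as = k + 1 \<longrightarrow> k + sum_list as \<noteq> m"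
  proof (intro allI impI notI)
    fix as assume as: "avoids p q as" "length as = k + 1" "k + sum_list as = m"
    moreover have "as \<noteq> []" using as(2) by auto
    ultimately have "similarity m k (runs as)"
      using length_runs[of as] zeros_runs[of as] by (simp add: similarity_def)
    then show False using sol as(1) detects_runs_iff unfolding solves_def by blast
  qed
next
  assume no_sum: "\<forall>as. avoids p q as \<longrightarrow> length as = k + 1 \<longrightarrow> k + sum_list as \<noteq> m"
  show "solves (seed p q) m k"
    unfolding solves_def
  proof (intro allI impI)
    fix w assume sim: "similarity m k w"
    obtain as where as: "runs as = w" "length as = k + 1"
      using runs_surj[of w] sim by (auto simp: similarity_def)
    moreover have "as \<noteq> []" using as(2) by auto
    ultimately have "k + sum_list as = m"
      using length_runs[of as] sim by (simp add: similarity_def)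
    then show "detects (seed p q) w"
      using no_sum as detects_runs_iff by blast
  qed
qed

lemma solves_above_bound:
  assumes "\<And>as. avoids p q as \<Longrightarrow> length as = k + 1 \<Longrightarrow> sum_list as \<le> B" "k + B < m"
  shows "solves (seed p q) m k"
  using assms by (force simp: solves_seed_iff)

lemma critical_length_le:
  assumes "\<And>as. avoids p q as \<Longrightarrow> length as = k + 1 \<Longrightarrow> sum_list as \<le> B"
  shows "critical_length (seed p q) k \<le> k + B + 1"
  unfolding critical_length_def
  by (rule Least_le) (auto intro: solves_above_bound[OF assms])

lemma critical_length_gt:
  assumes "avoids p q as" "length as = k + 1"
  shows "k + sum_list as < critical_length (seed p q) k"
proof -
  have "\<exists>m. \<forall>m'\<ge>m. solves (seed p q) m' k"
    using solves_above_bound[of p q k "(k + 1) * (p + q)"] avoids_sum_le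
    by (metis Suc_le_eq add_Suc_right)
  then have "\<forall>m'\<ge>critical_length (seed p q) k. solves (seed p q) m' k"
    unfolding critical_length_def by (rule LeastI_ex)
  moreover have "\<not> solves (seed p q) (k + sum_list as) k"
    using assms by (auto simp: solves_seed_iff)
  ultimately show ?thesis by (meson not_less)
qed

section \<open>Reversal symmetry\<close>

lemma matches_at_rev:
  assumes "matches_at Q w i"
  shows "matches_at (rev Q) (rev w) (length w - length Q - i)"
  unfolding matches_at_def
proof (intro conjI allI impI)
  have len: "i + length Q \<le> length w" and hit: "\<And>t. t < length Q \<Longrightarrow> Q ! t \<Longrightarrow> w ! (i + t)"
    using assms unfolding matches_at_def by auto
  then show "length w - length Q - i + length (rev Q) \<le> length (rev w)" by simp
  fix t assume t: "t < length (rev Q)" "rev Q ! t"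
  then have "Q ! (length Q - Suc t)" "length Q - Suc t < length Q" by (simp_all add: rev_nth)
  then have "w ! (i + (length Q - Suc t))" by (rule hit[rotated])
  moreover have "length w - Suc (length w - length Q - i + t) = i + (length Q - Suc t)"
    using len t by auto
  ultimately show "rev w ! (length w - length Q - i + t)"
    using len t by (simp add: rev_nth)
qed

lemma detects_rev: "detects (rev Q) (rev w) \<longleftrightarrow> detects Q w"
  unfolding detects_def using matches_at_rev[of Q w] matches_at_rev[of "rev Q" "rev w"] by auto

text \<open>Reversal permutes the (m,k)-similarities, so reversed seeds have equal critical length.\<close>
lemma solves_rev: "solves (rev Q) m k \<longleftrightarrow> solves Q m k"
proof -
  have sim: "similarity m k (rev w) \<longleftrightarrow> similarity m k w" for w
    by (simp add: similarity_def rev_filter[symmetric])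
  show ?thesis
    unfolding solves_def by (metis detects_rev rev_rev_ident sim)
qed

lemma critical_length_rev: "critical_length (rev Q) k = critical_length Q k"
  unfolding critical_length_def solves_rev ..

section \<open>Upper bound for the seed #^P - #^R with R <= P <= 2R+1\<close>

text \<open>Largest possible sum of two consecutive runs of an avoiding list (p+q, then q-1).\<close>
definition pair_bound :: "nat \<Rightarrow> nat \<Rightarrow> nat" where
  "pair_bound p q = p + 2 * q - 1"

text \<open>Maximal sum of an (P,R)-avoiding list of length m+1.\<close>
definition sum_bound :: "nat \<Rightarrow> nat \<Rightarrow> nat \<Rightarrow> nat" where
  "sum_bound P R m = P + R + (m div 2) * pair_bound P R + (m mod 2) * (P - 1)"

lemma sum_bound_Suc_Suc: "sum_bound P R (Suc (Suc m)) = sum_bound P R m + pair_bound P R"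
  unfolding sum_bound_def by simp

text \<open>Adding one short run (length < P) stays within the bound; here P <= 2R+1 is used.\<close>
lemma sum_bound_Suc:
  assumes "P \<le> 2 * R + 1" "1 \<le> R"
  shows "(P - 1) + sum_bound P R m \<le> sum_bound P R (Suc m)"
proof (cases "even m")
  case True
  then show ?thesis unfolding sum_bound_def by auto
next
  case False
  then have "Suc m div 2 = m div 2 + 1" "Suc m mod 2 = 0" "m mod 2 = 1"
    by (auto elim: oddE)
  moreover have "(P - 1) + (P - 1) \<le> pair_bound P R" using assms unfolding pair_bound_def by simp
  ultimately show ?thesis unfolding sum_bound_def by simp
qed

text \<open>By strong induction: either the first run is short (< P), or it is followed by a
  run shorter than R, and the first two runs sum to at most the pair bound.\<close>
lemma avoids_sum_le_sum_bound:
  assumes "R \<le> P" "P \<le> 2 * R + 1" "1 \<le> R"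
  shows "avoids P R as \<Longrightarrow> as \<noteq> [] \<Longrightarrow> sum_list as \<le> sum_bound P R (length as - 1)"
proof (induction "length as" arbitrary: as rule: less_induct)
  case less
  show ?case
  proof (cases as rule: runs.cases)
    case (2 a)
    then show ?thesis using less.prems by (simp add: sum_bound_def)
  next
    case (3 a b rest)
    have tl: "avoids P R (b # rest)" and a: "a \<le> P + R" and ab: "\<not> (P \<le> a \<and> R \<le> b)"
      using less.prems 3 by auto
    show ?thesis
    proof (cases "a < P")
      case True
      have "sum_list (b # rest) \<le> sum_bound P R (length rest)"
        using less.hyps[of "b # rest"] tl 3 by simp
      then have "sum_list as \<le> (P - 1) + sum_bound P R (length rest)" using True 3 by simp
      also have "\<dots> \<le> sum_bound P R (Suc (length rest))" using sum_bound_Suc assms(2,3) by blast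
      finally show ?thesis using 3 by simp
    next
      case False
      then have b: "b \<le> R - 1" using ab by simp
      show ?thesis
      proof (cases rest)
        case Nil
        then show ?thesis using 3 a b assms by (simp add: sum_bound_def)
      next
        case (Cons c cs)
        have "sum_list rest \<le> sum_bound P R (length rest - 1)"
          using less.hyps[of rest] avoids_tl[OF tl] 3 Cons by simp
        then have "sum_list as \<le> pair_bound P R + sum_bound P R (length rest - 1)"
          using a b 3 assms unfolding pair_bound_def by simp
        also have "\<dots> = sum_bound P R (length as - 1)"
          using sum_bound_Suc_Suc 3 Cons by simp
        finally show ?thesis .
      qed
    qed
  qed (use less.prems in simp)
qed

lemma critical_length_le_sum_bound:
  assumes "R \<le> P" "P \<le> 2 * R + 1" "1 \<le> R"
  shows "critical_length (seed P R) k \<le> k + sum_bound P R k + 1"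
  using avoids_sum_le_sum_bound[OF assms] by (intro critical_length_le) fastforce

section \<open>Lower bounds for an arbitrary seed #^p - #^q with q <= p\<close>

definition short_runs :: "nat \<Rightarrow> nat \<Rightarrow> nat \<Rightarrow> nat list" where
  "short_runs p q j = replicate j (p - 1) @ [p + q]"

lemma avoids_short_runs:
  assumes "1 \<le> p"
  shows "avoids p q (short_runs p q j)"
proof (induction j)
  case (Suc j)
  then show ?case using assms by (cases j) (auto simp: short_runs_def)
qed (simp add: short_runs_def)

fun alternating_runs :: "nat \<Rightarrow> nat \<Rightarrow> nat \<Rightarrow> nat list" where
  "alternating_runs p q 0 = [p + q]"
| "alternating_runs p q (Suc j) = (p + q) # (q - 1) # alternating_runs p q j"

lemma alternating_runs_hd: "\<exists>l. alternating_runs p q j = (p + q) # l"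
  by (cases j) auto

lemma avoids_alternating_runs:
  assumes "q \<le> p" "1 \<le> q"
  shows "avoids p q (alternating_runs p q j)"
proof (induction j)
  case (Suc j)
  then show ?case using assms alternating_runs_hd[of p q j] by auto
qed simp

lemma avoids_short_alternating_runs:
  assumes "q \<le> p" "1 \<le> q"
  shows "avoids p q ((p - 1) # alternating_runs p q j)"
  using avoids_alternating_runs[OF assms, of j] alternating_runs_hd[of p q j] assms by auto

lemma length_alternating_runs: "length (alternating_runs p q j) = 2 * j + 1"
  by (induction j) auto

lemma sum_alternating_runs:
  "1 \<le> q \<Longrightarrow> sum_list (alternating_runs p q j) = p + q + j * pair_bound p q"
  by (induction j) (auto simp: pair_bound_def)

lemma critical_length_gt_max:
  assumes "q \<le> p" "1 \<le> q"
  shows "k + max (k * (p - 1) + p + q) (p + q + (k div 2) * pair_bound p q + (k mod 2) * (p - 1))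
         < critical_length (seed p q) k"
proof -
  have "length (short_runs p q k) = k + 1" "sum_list (short_runs p q k) = k * (p - 1) + p + q"
    by (simp_all add: short_runs_def sum_list_replicate)
  then have short: "k + (k * (p - 1) + p + q) < critical_length (seed p q) k"
    using critical_length_gt[OF avoids_short_runs] assms by (metis le_trans)
  have alternating:
    "k + (p + q + (k div 2) * pair_bound p q + (k mod 2) * (p - 1)) < critical_length (seed p q) k"
  proof (cases "even k")
    case True
    then obtain j where k: "k = 2 * j" by blast
    have "length (alternating_runs p q j) = k + 1"
      using length_alternating_runs k by simp
    moreover have "sum_list (alternating_runs p q j)
        = p + q + (k div 2) * pair_bound p q + (k mod 2) * (p - 1)"
      using sum_alternating_runs[OF assms(2)] k by simp
    ultimately show ?thesis
      using critical_length_gt[OF avoids_alternating_runs[OF assms]] by metis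
  next
    case False
    then obtain j where k: "k = 2 * j + 1" using oddE by blast
    have "length ((p - 1) # alternating_runs p q j) = k + 1"
      using length_alternating_runs k by simp
    moreover have "sum_list ((p - 1) # alternating_runs p q j)
        = p + q + (k div 2) * pair_bound p q + (k mod 2) * (p - 1)"
      using sum_alternating_runs[OF assms(2)] k by simp
    ultimately show ?thesis
      using critical_length_gt[OF avoids_short_alternating_runs[OF assms]] by metis
  qed
  show ?thesis using short alternating by simp
qed

text \<open>If q >= R the alternating
  family wins, otherwise p > P and the short family wins.\<close>
lemma sum_bound_le_max:
  assumes "R \<le> P" "2 * R \<le> P + 1" "1 \<le> R"
    and "p + q = P + R" "q \<le> p" "1 \<le> q" "1 \<le> K" "e \<le> 1"
  shows "sum_bound P R (2 * K + e)
    \<le> max ((2 * K + e) * (p - 1) + p + q) (p + q + K * pair_bound p q + e * (p - 1))"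
proof -
  have dm: "(2 * K + e) div 2 = K" "(2 * K + e) mod 2 = e" using assms(8) by auto
  show ?thesis
  proof (cases "R \<le> q")
    case True
    have pair: "pair_bound p q = pair_bound P R + (q - R)" and short: "P - 1 = (p - 1) + (q - R)"
      using True assms unfolding pair_bound_def by auto
    have "K * pair_bound p q = K * pair_bound P R + K * (q - R)"
      unfolding pair by (simp add: distrib_left)
    moreover have "e * (P - 1) = e * (p - 1) + e * (q - R)"
      unfolding short by (simp add: distrib_left)
    moreover have "e * (q - R) \<le> K * (q - R)" using assms by (intro mult_right_mono) auto
    ultimately have "sum_bound P R (2 * K + e) \<le> p + q + K * pair_bound p q + e * (p - 1)"
      unfolding sum_bound_def dm using assms(4) by linarith
    then show ?thesis by linarith
  next
    case False
    then have "P \<le> p - 1" using assms by simp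
    then have "(2 * K + e) * P \<le> (2 * K + e) * (p - 1)" by simp
    moreover have "K * pair_bound P R \<le> K * (2 * P)" using assms unfolding pair_bound_def by simp
    moreover have "e * (P - 1) \<le> e * P" by simp
    moreover have "(2 * K + e) * P = 2 * (K * P) + e * P" by (simp add: algebra_simps)
    ultimately have "sum_bound P R (2 * K + e) \<le> (2 * K + e) * (p - 1) + p + q"
      unfolding sum_bound_def dm using assms(4) by linarith
    then show ?thesis by linarith
  qed
qed

lemma critical_length_gt_sum_bound:
  assumes "R \<le> P" "2 * R \<le> P + 1" "1 \<le> R" "k \<ge> 2"
    and "Q \<in> C1 (P + R)"
  shows "k + sum_bound P R k < critical_length Q k"
proof -
  have ordered: "k + sum_bound P R k < critical_length (seed p q) k"
    if "q \<le> p" "1 \<le> q" "p + q = P + R" for p q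
  proof -
    have "k = 2 * (k div 2) + k mod 2" "1 \<le> k div 2" "k mod 2 \<le> 1" using \<open>k \<ge> 2\<close> by auto
    then have "sum_bound P R k \<le> max (k * (p - 1) + p + q)
                 (p + q + (k div 2) * pair_bound p q + (k mod 2) * (p - 1))"
      using sum_bound_le_max[OF assms(1-3) that(3,1,2)] by metis
    then show ?thesis using critical_length_gt_max[OF that(1,2), of k] by linarith
  qed
  obtain p q where Q: "Q = seed p q" "1 \<le> p" "1 \<le> q" "p + q = P + R"
    using assms(5) C1_iff by blast
  show ?thesis
  proof (cases "q \<le> p")
    case True
    then show ?thesis using ordered Q by simp
  next
    case False
    then show ?thesis
      using ordered[of p q] Q critical_length_rev[of "seed p q" k] rev_seed[of p q] by simp
  qed
qed

text \<open>The integer closest to d/3 is (d+1) div 3 (d/3 is never a half-integer).\<close>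
lemma round_third: "nat (round (real d / 3)) = (d + 1) div 3"
proof -
  have "round (real d / 3) = int ((d + 1) div 3)"
    unfolding round_def by (rule floor_unique) linarith+
  then show ?thesis by simp
qed

lemma Qseed_eq: "Qseed d = seed (d - (d + 1) div 3) ((d + 1) div 3)"
  unfolding Qseed_def seed_def round_third Let_def by simp

theorem theorem1:
  fixes d k :: nat
  assumes "d \<ge> 2" and "k \<ge> 2"
  shows "k_optimal k d (Qseed d)"
proof -
  define R where "R = (d + 1) div 3"
  define P where "P = d - R"
  have "3 * R \<le> d + 1" "d + 1 < 3 * R + 3" unfolding R_def by linarith+
  then have PR: "R \<le> P" "P \<le> 2 * R + 1" "2 * R \<le> P + 1" "1 \<le> R" "P + R = d"
    using assms(1) unfolding P_def by linarith+
  have Q: "Qseed d = seed P R" unfolding Qseed_eq P_def R_def ..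
  have "Qseed d \<in> C1 d"
    unfolding Q C1_iff using PR by (intro exI[of _ P] exI[of _ R]) auto
  moreover have "critical_length (Qseed d) k \<le> critical_length Q' k" if "Q' \<in> C1 d" for Q'
    using critical_length_le_sum_bound[OF PR(1,2,4), of k]
      critical_length_gt_sum_bound[OF PR(1,3,4) assms(2), of Q'] that PR(5) Q by simp
  ultimately show ?thesis unfolding k_optimal_def by blast
qed

end
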